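(* Let $\eta\in(0,1)$ be such that for every real sequence $\{\gamma_n\}_{n\in\mathbb{Z}}$ with $|\gamma_n-n|<\eta$ for all $n$, the system $E(\{\gamma_n\})$ is a Riesz basis of $L^2[0,1]$. Then there exists $\Lambda\subseteq\mathbb{Z}$ such that $E(\Lambda)$ is a Riesz basis of $L^2[0,\eta]$.
   Context: For real $\lambda$, $e_\lambda(t)=e^{2\pi i\lambda t}$, and $E(\Lambda)=\{e_\lambda\}_{\lambda\in\Lambda}$. A Riesz basis of a Hilbert space is the image of an orthonormal basis under a bounded invertible operator. *)

theory Defs
  imports "HOL-Analysis.Analysis"
begin

definition expo :: "real \<Rightarrow> real \<Rightarrow> complex" where
  "expo lam = (\<lambda>t. exp (complex_of_real (2 * pi * lam * t) * \<i>))"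

text \<open>L^2[0,a]: measurable, square-integrable complex functions on [0,a] (w.r.t. Lebesgue
  measure), considered modulo equality almost everywhere (see l2eq).\<close>
definition L2 :: "real \<Rightarrow> (real \<Rightarrow> complex) set" where
  "L2 a = {f. f \<in> borel_measurable (lebesgue_on {0..a}) \<and>
              integrable (lebesgue_on {0..a}) (\<lambda>t. (cmod (f t))\<^sup>2)}"

definition l2inner :: "real \<Rightarrow> (real \<Rightarrow> complex) \<Rightarrow> (real \<Rightarrow> complex) \<Rightarrow> complex" where
  "l2inner a f g = (LINT t | lebesgue_on {0..a}. f t * cnj (g t))"

definition l2norm :: "real \<Rightarrow> (real \<Rightarrow> complex) \<Rightarrow> real" where
  "l2norm a f = sqrt (LINT t | lebesgue_on {0..a}. (cmod (f t))\<^sup>2)"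

definition l2eq :: "real \<Rightarrow> (real \<Rightarrow> complex) \<Rightarrow> (real \<Rightarrow> complex) \<Rightarrow> bool" where
  "l2eq a f g \<longleftrightarrow> (AE t in lebesgue_on {0..a}. f t = g t)"

definition bounded_op :: "real \<Rightarrow> ((real \<Rightarrow> complex) \<Rightarrow> (real \<Rightarrow> complex)) \<Rightarrow> bool" where
  "bounded_op a T \<longleftrightarrow>
     (\<forall>f\<in>L2 a. T f \<in> L2 a) \<and>
     (\<forall>f\<in>L2 a. \<forall>g\<in>L2 a. l2eq a (T (\<lambda>t. f t + g t)) (\<lambda>t. T f t + T g t)) \<and>
     (\<forall>f\<in>L2 a. \<forall>c::complex. l2eq a (T (\<lambda>t. c * f t)) (\<lambda>t. c * T f t)) \<and>
     (\<exists>C. \<forall>f\<in>L2 a. l2norm a (T f) \<le> C * l2norm a f)"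

definition bounded_invertible_op :: "real \<Rightarrow> ((real \<Rightarrow> complex) \<Rightarrow> (real \<Rightarrow> complex)) \<Rightarrow> bool" where
  "bounded_invertible_op a T \<longleftrightarrow> bounded_op a T \<and>
     (\<exists>S. bounded_op a S \<and> (\<forall>f\<in>L2 a. l2eq a (S (T f)) f \<and> l2eq a (T (S f)) f))"

definition orthonormal_basis :: "real \<Rightarrow> 'i set \<Rightarrow> ('i \<Rightarrow> real \<Rightarrow> complex) \<Rightarrow> bool" where
  "orthonormal_basis a I u \<longleftrightarrow>
     (\<forall>i\<in>I. u i \<in> L2 a) \<and>
     (\<forall>i\<in>I. \<forall>j\<in>I. l2inner a (u i) (u j) = (if i = j then 1 else 0)) \<and>
     (\<forall>f\<in>L2 a. \<forall>\<epsilon>>0. \<exists>F c. finite F \<and> F \<subseteq> I \<and>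
        l2norm a (\<lambda>t. f t - (\<Sum>i\<in>F. c i * u i t)) < \<epsilon>)"

definition riesz_basis :: "real \<Rightarrow> 'i set \<Rightarrow> ('i \<Rightarrow> real \<Rightarrow> complex) \<Rightarrow> bool" where
  "riesz_basis a I v \<longleftrightarrow>
     (\<exists>u T. orthonormal_basis a I u \<and> bounded_invertible_op a T \<and>
            (\<forall>i\<in>I. l2eq a (T (u i)) (v i)))"

end

theory Submission
  imports Defs
begin

text \<open>
  Put \<open>h n = \<lfloor>n / \<eta>\<rfloor>\<close> and \<open>\<gamma> n = \<eta> * h n\<close>.  Then \<open>\<bar>\<gamma> n - n\<bar> < \<eta>\<close>,
  so by hypothesis \<open>E({\<eta> h(n)})\<close> is a Riesz basis of \<open>L\<^sup>2[0,1]\<close>.  The dilation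
  \<open>f \<mapsto> f(\<cdot>/\<eta>)\<close> maps \<open>expo (\<eta> h(n))\<close> to \<open>expo (h(n))\<close> and is, up to the factor \<open>\<surd>\<eta>\<close>,
  a unitary map \<open>L\<^sup>2[0,1] \<rightarrow> L\<^sup>2[0,\<eta>]\<close>; hence \<open>E({h(n)})\<close> is a Riesz basis of \<open>L\<^sup>2[0,\<eta>]\<close>.
  Since \<open>\<eta> < 1\<close>, \<open>h\<close> is injective, so this family is \<open>E(\<Lambda>)\<close> for \<open>\<Lambda> = h(\<int>)\<close>.
\<close>

section \<open>Dilations of Lebesgue measure on an interval\<close>

lemma indicator_interval_dilate:
  fixes c a s :: real
  assumes "c > 0"
  shows "indicat_real {0..a} (c * s) = indicat_real {0..a/c} s"
  using assms by (auto simp: indicator_def field_simps zero_le_mult_iff)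

lemma AE_lebesgue_dilate:
  fixes c :: real
  assumes c: "c \<noteq> 0" and ae: "AE x in lebesgue. P x"
  shows "AE x in lebesgue. P (c * x)"
proof -
  from ae obtain N where N: "{x \<in> space lebesgue. \<not> P x} \<subseteq> N"
      "emeasure lebesgue N = 0" "N \<in> sets lebesgue"
    by (rule AE_E)
  define N' where "N' = ((*\<^sub>R) c) -` N \<inter> space lebesgue"
  have "N' \<in> sets lebesgue"
    unfolding N'_def using measurable_sets[OF lebesgue_measurable_scaling N(3)] .
  moreover have "N' = (\<lambda>x. (1/c) *\<^sub>R x + 0) ` N"
    using c by (auto simp: N'_def image_def) (metis nonzero_mult_div_cancel_left)
  then have "emeasure lebesgue N' = 0"
    using emeasure_lebesgue_affine[of "1/c" 0 N] N(2) by simp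
  ultimately have "N' \<in> null_sets lebesgue" by auto
  moreover have "{x \<in> space lebesgue. \<not> P (c * x)} \<subseteq> N'"
    using N(1) by (auto simp: N'_def)
  ultimately show ?thesis by (rule AE_I')
qed

lemma measurable_dilate:
  fixes f :: "real \<Rightarrow> 'b::euclidean_space"
  assumes c: "c > 0" and f: "f \<in> borel_measurable (lebesgue_on {0..a})"
  shows "(\<lambda>s. f (c * s)) \<in> borel_measurable (lebesgue_on {0..a/c})"
proof -
  have "(\<lambda>x. indicat_real {0..a} x *\<^sub>R f x) \<in> borel_measurable lebesgue"
    using f by (subst (asm) borel_measurable_restrict_space_iff) auto
  from borel_measurable_affine[OF this, of c 0] c
  have "(\<lambda>x. indicat_real {0..a/c} x *\<^sub>R f (c * x)) \<in> borel_measurable lebesgue"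
    by (simp add: indicator_interval_dilate)
  then show ?thesis
    by (subst borel_measurable_restrict_space_iff) auto
qed

lemma integrable_dilate_iff:
  fixes f :: "real \<Rightarrow> 'b::euclidean_space"
  assumes c: "c > 0"
  shows "integrable (lebesgue_on {0..a}) f \<longleftrightarrow>
         integrable (lebesgue_on {0..a/c}) (\<lambda>s. f (c * s))"
proof -
  have "integrable (lebesgue_on {0..a}) f \<longleftrightarrow>
        integrable lebesgue (\<lambda>x. indicat_real {0..a} x *\<^sub>R f x)"
    by (subst integrable_restrict_space) auto
  also have "\<dots> \<longleftrightarrow> integrable lebesgue (\<lambda>x. indicat_real {0..a} (0 + c * x) *\<^sub>R f (0 + c * x))"
    using c by (subst lebesgue_integrable_real_affine_iff) auto
  also have "\<dots> \<longleftrightarrow> integrable (lebesgue_on {0..a/c}) (\<lambda>s. f (c * s))"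
    using c by (subst integrable_restrict_space) (auto simp: indicator_interval_dilate)
  finally show ?thesis .
qed

lemma integral_dilate:
  fixes f :: "real \<Rightarrow> 'b::euclidean_space"
  assumes c: "c > 0"
  shows "(LINT x | lebesgue_on {0..a}. f x) = c *\<^sub>R (LINT s | lebesgue_on {0..a/c}. f (c * s))"
proof -
  have "(LINT x | lebesgue_on {0..a}. f x) = (LINT x | lebesgue. indicat_real {0..a} x *\<^sub>R f x)"
    by (subst integral_restrict_space) auto
  also have "\<dots> = c *\<^sub>R (LINT x | lebesgue. indicat_real {0..a} (0 + c * x) *\<^sub>R f (0 + c * x))"
    using c by (subst lebesgue_integral_real_affine[of c _ 0]) auto
  also have "\<dots> = c *\<^sub>R (LINT s | lebesgue_on {0..a/c}. f (c * s))"
    using c by (subst integral_restrict_space) (auto simp: indicator_interval_dilate)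
  finally show ?thesis .
qed

lemma AE_dilate:
  fixes a c :: real
  assumes c: "c > 0" and ae: "AE t in lebesgue_on {0..a}. P t"
  shows "AE s in lebesgue_on {0..a/c}. P (c * s)"
proof -
  have closed_sets: "{0..b} \<inter> space lebesgue \<in> sets lebesgue" for b :: real
    by (simp add: borel_closed sets_completionI_sets)
  have "AE t in lebesgue. t \<in> {0..a} \<longrightarrow> P t"
    using ae AE_restrict_space_iff[OF closed_sets] by simp
  from AE_lebesgue_dilate[OF _ this, of c] c
  have "AE s in lebesgue. c * s \<in> {0..a} \<longrightarrow> P (c * s)" by simp
  moreover have "c * s \<in> {0..a} \<longleftrightarrow> s \<in> {0..a/c}" for s
    using c by (auto simp: field_simps zero_le_mult_iff)
  ultimately show ?thesis
    using AE_restrict_space_iff[OF closed_sets] by simp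
qed

lemma L2_dilate:
  assumes c: "c > 0" and f: "f \<in> L2 a"
  shows "(\<lambda>s. f (c * s)) \<in> L2 (a/c)"
  using f measurable_dilate[OF c, of f a]
    integrable_dilate_iff[OF c, of a "\<lambda>t. (cmod (f t))\<^sup>2"]
  unfolding L2_def by auto

lemma l2norm_dilate:
  assumes c: "c > 0"
  shows "l2norm a f = sqrt c * l2norm (a/c) (\<lambda>s. f (c * s))"
  unfolding l2norm_def using integral_dilate[OF c, of a "\<lambda>t. (cmod (f t))\<^sup>2"]
  by (simp add: real_sqrt_mult)

lemma l2inner_dilate:
  assumes c: "c > 0"
  shows "l2inner a f g = of_real c * l2inner (a/c) (\<lambda>s. f (c * s)) (\<lambda>s. g (c * s))"
  unfolding l2inner_def using integral_dilate[OF c, of a "\<lambda>t. f t * cnj (g t)"]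
  by (simp add: scaleR_conv_of_real)

lemma l2eq_dilate:
  assumes c: "c > 0" and "l2eq a f g"
  shows "l2eq (a/c) (\<lambda>s. f (c * s)) (\<lambda>s. g (c * s))"
  using AE_dilate[OF c, where a=a and P="\<lambda>t. f t = g t"] assms(2) unfolding l2eq_def by simp

lemma L2_undilate:
  assumes c: "c > 0" and g: "g \<in> L2 (a/c)"
  shows "(\<lambda>t. g (t / c)) \<in> L2 a"
  using L2_dilate[of "1/c" g "a/c"] c g by simp

lemma l2norm_undilate:
  assumes c: "c > 0"
  shows "l2norm a (\<lambda>t. g (t / c)) = sqrt c * l2norm (a/c) g"
  using l2norm_dilate[OF c, of a "\<lambda>t. g (t / c)"] c by simp

lemma L2_cmult:
  assumes f: "f \<in> L2 a"
  shows "(\<lambda>t. k * f t) \<in> L2 a"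
proof -
  have "(\<lambda>t. (cmod (k * f t))\<^sup>2) = (\<lambda>t. (cmod k)\<^sup>2 * (cmod (f t))\<^sup>2)"
    by (simp add: norm_mult power_mult_distrib)
  then show ?thesis using f unfolding L2_def by auto
qed

lemma l2norm_cmult: "l2norm a (\<lambda>t. k * f t) = cmod k * l2norm a f"
proof -
  have "(\<lambda>t. (cmod (k * f t))\<^sup>2) = (\<lambda>t. (cmod k)\<^sup>2 * (cmod (f t))\<^sup>2)"
    by (simp add: norm_mult power_mult_distrib)
  then show ?thesis unfolding l2norm_def by (simp add: real_sqrt_mult)
qed

lemma l2inner_cmult: "l2inner a (\<lambda>t. k * f t) (\<lambda>t. l * g t) = k * cnj l * l2inner a f g"
proof -
  have "(\<lambda>t. k * f t * cnj (l * g t)) = (\<lambda>t. (k * cnj l) * (f t * cnj (g t)))"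
    by (simp add: ac_simps)
  then show ?thesis unfolding l2inner_def by simp
qed

lemma l2eq_cmult: "l2eq a f g \<Longrightarrow> l2eq a (\<lambda>t. k * f t) (\<lambda>t. k * g t)"
  unfolding l2eq_def by (auto elim: eventually_mono)

section \<open>Conjugating operators by dilations\<close>

definition dilate_conj ::
    "real \<Rightarrow> complex \<Rightarrow> complex \<Rightarrow> ((real \<Rightarrow> complex) \<Rightarrow> (real \<Rightarrow> complex))
      \<Rightarrow> (real \<Rightarrow> complex) \<Rightarrow> (real \<Rightarrow> complex)" where
  "dilate_conj c \<alpha> \<beta> T = (\<lambda>g s. \<alpha> * T (\<lambda>t. \<beta> * g (t / c)) (c * s))"

text \<open>Boundedness and linearity survive the transport; the bound gets multiplied by
  \<open>\<bar>\<alpha>\<bar> \<bar>\<beta>\<bar>\<close>, the two factors \<open>\<surd>c\<close> from the dilations cancelling.\<close>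
lemma bounded_op_dilate_conj:
  assumes c: "c > 0" and T: "bounded_op a T"
  shows "bounded_op (a/c) (dilate_conj c \<alpha> \<beta> T)"
proof -
  let ?G = "\<lambda>g t. \<beta> * g (t / c)"
  have G_L2: "?G g \<in> L2 a" if "g \<in> L2 (a/c)" for g
    using L2_cmult[OF L2_undilate[OF c that]] .
  from T have T_L2: "\<And>f. f \<in> L2 a \<Longrightarrow> T f \<in> L2 a"
    and T_add: "\<And>f g. f \<in> L2 a \<Longrightarrow> g \<in> L2 a \<Longrightarrow> l2eq a (T (\<lambda>t. f t + g t)) (\<lambda>t. T f t + T g t)"
    and T_mult: "\<And>f k. f \<in> L2 a \<Longrightarrow> l2eq a (T (\<lambda>t. k * f t)) (\<lambda>t. k * T f t)"
    unfolding bounded_op_def by blast+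
  from T obtain C where T_bound: "\<And>f. f \<in> L2 a \<Longrightarrow> l2norm a (T f) \<le> C * l2norm a f"
    unfolding bounded_op_def by blast
  show ?thesis unfolding bounded_op_def dilate_conj_def
  proof (intro conjI ballI allI)
    fix f assume "f \<in> L2 (a/c)"
    then show "(\<lambda>s. \<alpha> * T (?G f) (c * s)) \<in> L2 (a/c)"
      using L2_cmult[OF L2_dilate[OF c T_L2[OF G_L2]]] by blast
  next
    fix f g assume f: "f \<in> L2 (a/c)" and g: "g \<in> L2 (a/c)"
    have "?G (\<lambda>t. f t + g t) = (\<lambda>t. ?G f t + ?G g t)"
      by (simp add: distrib_left)
    then have "l2eq a (T (?G (\<lambda>t. f t + g t))) (\<lambda>t. T (?G f) t + T (?G g) t)"
      using T_add[OF G_L2[OF f] G_L2[OF g]] by simp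
    from l2eq_cmult[OF l2eq_dilate[OF c this], of \<alpha>]
    show "l2eq (a/c) (\<lambda>s. \<alpha> * T (?G (\<lambda>t. f t + g t)) (c * s))
        (\<lambda>s. \<alpha> * T (?G f) (c * s) + \<alpha> * T (?G g) (c * s))"
      by (simp add: distrib_left)
  next
    fix f and k :: complex assume f: "f \<in> L2 (a/c)"
    have "?G (\<lambda>t. k * f t) = (\<lambda>t. k * ?G f t)"
      by (simp add: ac_simps)
    then have "l2eq a (T (?G (\<lambda>t. k * f t))) (\<lambda>t. k * T (?G f) t)"
      using T_mult[OF G_L2[OF f]] by simp
    from l2eq_cmult[OF l2eq_dilate[OF c this], of \<alpha>]
    show "l2eq (a/c) (\<lambda>s. \<alpha> * T (?G (\<lambda>t. k * f t)) (c * s))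
        (\<lambda>s. k * (\<alpha> * T (?G f) (c * s)))"
      by (simp add: ac_simps)
  next
    let ?D = "cmod \<alpha> * C * cmod \<beta>"
    show "\<exists>D. \<forall>f\<in>L2 (a/c). l2norm (a/c) (\<lambda>s. \<alpha> * T (?G f) (c * s)) \<le> D * l2norm (a/c) f"
    proof (intro exI ballI)
      fix f assume f: "f \<in> L2 (a/c)"
      have "sqrt c * l2norm (a/c) (\<lambda>s. \<alpha> * T (?G f) (c * s)) = cmod \<alpha> * l2norm a (T (?G f))"
        by (simp add: l2norm_cmult l2norm_dilate[OF c, of a "T (?G f)"])
      also have "\<dots> \<le> cmod \<alpha> * (C * l2norm a (?G f))"
        using T_bound[OF G_L2[OF f]] by (intro mult_left_mono) auto
      also have "\<dots> = sqrt c * (?D * l2norm (a/c) f)"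
        by (simp add: l2norm_cmult l2norm_undilate[OF c])
      finally show "l2norm (a/c) (\<lambda>s. \<alpha> * T (?G f) (c * s)) \<le> ?D * l2norm (a/c) f"
        using c by simp
    qed
  qed
qed

lemma dilate_conj_inverse:
  assumes c: "c > 0" and \<alpha>: "\<alpha> \<noteq> 0" and \<beta>: "\<beta> \<noteq> 0"
    and ST: "\<And>f. f \<in> L2 a \<Longrightarrow> l2eq a (S (T f)) f"
    and f: "f \<in> L2 (a/c)"
  shows "l2eq (a/c) (dilate_conj c (1/\<beta>) (1/\<alpha>) S (dilate_conj c \<alpha> \<beta> T f)) f"
proof -
  define F where "F = (\<lambda>t. \<beta> * f (t / c))"
  have "(\<lambda>t. 1/\<alpha> * dilate_conj c \<alpha> \<beta> T f (t / c)) = T F"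
    using c \<alpha> by (simp add: dilate_conj_def F_def)
  moreover have "l2eq (a/c) (\<lambda>s. 1/\<beta> * S (T F) (c * s)) (\<lambda>s. 1/\<beta> * F (c * s))"
    using l2eq_cmult[OF l2eq_dilate[OF c ST]] L2_cmult[OF L2_undilate[OF c f]]
    unfolding F_def by blast
  moreover have "(\<lambda>s. 1/\<beta> * F (c * s)) = f"
    using c \<beta> by (simp add: F_def)
  ultimately show ?thesis
    unfolding dilate_conj_def by simp
qed

lemma bounded_invertible_op_dilate_conj:
  assumes c: "c > 0" and \<alpha>: "\<alpha> \<noteq> 0" and \<beta>: "\<beta> \<noteq> 0"
    and T: "bounded_invertible_op a T"
  shows "bounded_invertible_op (a/c) (dilate_conj c \<alpha> \<beta> T)"
proof -
  from T obtain S where T_bounded: "bounded_op a T" and S_bounded: "bounded_op a S"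
    and ST: "\<And>f. f \<in> L2 a \<Longrightarrow> l2eq a (S (T f)) f"
    and TS: "\<And>f. f \<in> L2 a \<Longrightarrow> l2eq a (T (S f)) f"
    unfolding bounded_invertible_op_def by blast
  have "l2eq (a/c) (dilate_conj c (1/\<beta>) (1/\<alpha>) S (dilate_conj c \<alpha> \<beta> T f)) f \<and>
        l2eq (a/c) (dilate_conj c \<alpha> \<beta> T (dilate_conj c (1/\<beta>) (1/\<alpha>) S f)) f"
    if "f \<in> L2 (a/c)" for f
    using dilate_conj_inverse[where S=S and T=T, OF c \<alpha> \<beta> ST that]
      dilate_conj_inverse[where \<alpha>="1/\<beta>" and \<beta>="1/\<alpha>" and S=T and T=S, OF c _ _ TS that] \<alpha> \<beta>
    by simp
  with bounded_op_dilate_conj[OF c T_bounded] bounded_op_dilate_conj[OF c S_bounded]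
  show ?thesis unfolding bounded_invertible_op_def by blast
qed

section \<open>Riesz bases under dilation and reindexing\<close>

text \<open>Since dilation by \<open>c\<close> divides norms by \<open>\<surd>c\<close>, the rescaled dilation
  \<open>f \<mapsto> \<surd>c f(c\<cdot>)\<close> carries orthonormal bases of \<open>L\<^sup>2[0,a]\<close> to those of \<open>L\<^sup>2[0,a/c]\<close>.\<close>
lemma orthonormal_basis_dilate:
  assumes c: "c > 0" and u: "orthonormal_basis a I u"
  shows "orthonormal_basis (a/c) I (\<lambda>i s. of_real (sqrt c) * u i (c * s))"
proof -
  let ?k = "complex_of_real (sqrt c)"
  from u have u_L2: "\<And>i. i \<in> I \<Longrightarrow> u i \<in> L2 a"
    and u_orth: "\<And>i j. i \<in> I \<Longrightarrow> j \<in> I \<Longrightarrow> l2inner a (u i) (u j) = (if i = j then 1 else 0)"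
    and u_dense: "\<And>f \<delta>. f \<in> L2 a \<Longrightarrow> \<delta> > 0 \<Longrightarrow>
       \<exists>F d. finite F \<and> F \<subseteq> I \<and> l2norm a (\<lambda>t. f t - (\<Sum>i\<in>F. d i * u i t)) < \<delta>"
    unfolding orthonormal_basis_def by blast+
  have k_sq: "?k * cnj ?k = of_real c"
    using c by (simp flip: of_real_mult)
  show ?thesis
    unfolding orthonormal_basis_def
  proof (intro conjI ballI allI impI)
    fix i assume "i \<in> I"
    then show "(\<lambda>s. ?k * u i (c * s)) \<in> L2 (a/c)"
      using L2_cmult[OF L2_dilate[OF c u_L2]] by blast
  next
    fix i j assume "i \<in> I" "j \<in> I"
    then have "of_real c * l2inner (a/c) (\<lambda>s. u i (c * s)) (\<lambda>s. u j (c * s)) = (if i = j then 1 else 0)"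
      using u_orth l2inner_dilate[OF c, of a "u i" "u j"] by simp
    moreover have "l2inner (a/c) (\<lambda>s. ?k * u i (c * s)) (\<lambda>s. ?k * u j (c * s))
        = of_real c * l2inner (a/c) (\<lambda>s. u i (c * s)) (\<lambda>s. u j (c * s))"
      by (simp only: l2inner_cmult k_sq)
    ultimately show "l2inner (a/c) (\<lambda>s. ?k * u i (c * s)) (\<lambda>s. ?k * u j (c * s)) = (if i = j then 1 else 0)"
      by simp
  next
    fix f and \<epsilon> :: real assume f: "f \<in> L2 (a/c)" and \<epsilon>: "\<epsilon> > 0"
    have "sqrt c * \<epsilon> > 0" using c \<epsilon> by simp
    from u_dense[OF L2_undilate[OF c f] this] obtain F d where F: "finite F" "F \<subseteq> I"
      and approx: "l2norm a (\<lambda>t. f (t / c) - (\<Sum>i\<in>F. d i * u i t)) < sqrt c * \<epsilon>"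
      by blast
    have "(\<lambda>s. f s - (\<Sum>i\<in>F. d i / ?k * (?k * u i (c * s))))
        = (\<lambda>s. f (c * s / c) - (\<Sum>i\<in>F. d i * u i (c * s)))"
      using c by simp
    moreover have "sqrt c * l2norm (a/c) \<dots> < sqrt c * \<epsilon>"
      using approx l2norm_dilate[OF c, of a "\<lambda>t. f (t / c) - (\<Sum>i\<in>F. d i * u i t)"] by simp
    ultimately have "l2norm (a/c) (\<lambda>s. f s - (\<Sum>i\<in>F. d i / ?k * (?k * u i (c * s)))) < \<epsilon>"
      using c by simp
    with F show "\<exists>F d. finite F \<and> F \<subseteq> I \<and>
        l2norm (a/c) (\<lambda>s. f s - (\<Sum>i\<in>F. d i * (?k * u i (c * s)))) < \<epsilon>"
      by (intro exI[of _ F] exI[of _ "\<lambda>i. d i / ?k"]) simp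
  qed
qed

text \<open>Dilating every member of a Riesz basis of \<open>L\<^sup>2[0,a]\<close> gives a Riesz basis of
  \<open>L\<^sup>2[0,a/c]\<close>: conjugate the operator by the dilation.\<close>
lemma riesz_basis_dilate:
  assumes c: "c > 0" and v: "riesz_basis a I v"
  shows "riesz_basis (a/c) I (\<lambda>i s. v i (c * s))"
proof -
  let ?k = "complex_of_real (sqrt c)"
  from v obtain u T where u: "orthonormal_basis a I u" and T: "bounded_invertible_op a T"
    and Tu: "\<And>i. i \<in> I \<Longrightarrow> l2eq a (T (u i)) (v i)"
    unfolding riesz_basis_def by blast
  have "?k \<noteq> 0" using c by simp
  then have "bounded_invertible_op (a/c) (dilate_conj c 1 (1 / ?k) T)"
    using bounded_invertible_op_dilate_conj[OF c _ _ T] by simp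
  moreover have "l2eq (a/c) (dilate_conj c 1 (1 / ?k) T (\<lambda>s. ?k * u i (c * s))) (\<lambda>s. v i (c * s))"
    if "i \<in> I" for i
  proof -
    have "(\<lambda>t. 1 / ?k * (?k * u i (c * (t / c)))) = u i"
      using c by simp
    then show ?thesis
      using l2eq_dilate[OF c Tu[OF that]] by (simp add: dilate_conj_def)
  qed
  ultimately show ?thesis
    using orthonormal_basis_dilate[OF c u] unfolding riesz_basis_def by blast
qed

lemma riesz_basis_reindex:
  assumes h: "inj_on h I" and v: "riesz_basis a I (\<lambda>i. v (h i))"
  shows "riesz_basis a (h ` I) v"
proof -
  from v obtain u T where u: "orthonormal_basis a I u" and T: "bounded_invertible_op a T"
    and Tu: "\<And>i. i \<in> I \<Longrightarrow> l2eq a (T (u i)) (v (h i))"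
    unfolding riesz_basis_def by blast
  from u have u_L2: "\<And>i. i \<in> I \<Longrightarrow> u i \<in> L2 a"
    and u_orth: "\<And>i j. i \<in> I \<Longrightarrow> j \<in> I \<Longrightarrow> l2inner a (u i) (u j) = (if i = j then 1 else 0)"
    and u_dense: "\<And>f \<delta>. f \<in> L2 a \<Longrightarrow> \<delta> > 0 \<Longrightarrow>
       \<exists>F d. finite F \<and> F \<subseteq> I \<and> l2norm a (\<lambda>t. f t - (\<Sum>i\<in>F. d i * u i t)) < \<delta>"
    unfolding orthonormal_basis_def by blast+
  define g where "g = the_inv_into I h"
  have g_h: "g (h i) = i" if "i \<in> I" for i
    using h that by (simp add: g_def the_inv_into_f_f)
  have "orthonormal_basis a (h ` I) (\<lambda>j. u (g j))"
    unfolding orthonormal_basis_def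
  proof (intro conjI ballI allI impI)
    fix j assume "j \<in> h ` I"
    then show "u (g j) \<in> L2 a"
      using u_L2 g_h by auto
  next
    fix j j' assume "j \<in> h ` I" "j' \<in> h ` I"
    then show "l2inner a (u (g j)) (u (g j')) = (if j = j' then 1 else 0)"
      using u_orth g_h by auto
  next
    fix f and \<epsilon> :: real assume "f \<in> L2 a" "\<epsilon> > 0"
    from u_dense[OF this] obtain F d where F: "finite F" "F \<subseteq> I"
      and approx: "l2norm a (\<lambda>t. f t - (\<Sum>i\<in>F. d i * u i t)) < \<epsilon>"
      by blast
    have "(\<Sum>j\<in>h ` F. d (g j) * u (g j) t) = (\<Sum>i\<in>F. d i * u i t)" for t
      using F(2) g_h inj_on_subset[OF h F(2)] by (simp add: sum.reindex subset_iff)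
    with approx F show "\<exists>F d. finite F \<and> F \<subseteq> h ` I \<and>
        l2norm a (\<lambda>t. f t - (\<Sum>j\<in>F. d j * u (g j) t)) < \<epsilon>"
      by (intro exI[of _ "h ` F"] exI[of _ "\<lambda>j. d (g j)"]) auto
  qed
  moreover have "l2eq a (T (u (g j))) (v j)" if "j \<in> h ` I" for j
    using that Tu g_h by auto
  ultimately show ?thesis
    using T unfolding riesz_basis_def by blast
qed

section \<open>The integer frequencies \<open>\<lfloor>n/\<eta>\<rfloor>\<close>\<close>

lemma expo_dilate: "(\<lambda>s. expo lam (c * s)) = expo (lam * c)"
  unfolding expo_def by (simp add: ac_simps)

lemma floor_multiple_bounds:
  fixes \<eta> x :: real
  assumes \<eta>: "\<eta> > 0"
  shows "\<eta> * of_int \<lfloor>x / \<eta>\<rfloor> \<le> x" and "x < \<eta> * of_int \<lfloor>x / \<eta>\<rfloor> + \<eta>"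
proof -
  have "\<eta> * of_int \<lfloor>x / \<eta>\<rfloor> \<le> \<eta> * (x / \<eta>)"
    using \<eta> by (intro mult_left_mono) auto
  then show "\<eta> * of_int \<lfloor>x / \<eta>\<rfloor> \<le> x"
    using \<eta> by simp
  have "\<eta> * (x / \<eta>) < \<eta> * (of_int \<lfloor>x / \<eta>\<rfloor> + 1)"
    using \<eta> by (intro mult_strict_left_mono) auto
  then show "x < \<eta> * of_int \<lfloor>x / \<eta>\<rfloor> + \<eta>"
    using \<eta> by (simp add: distrib_left)
qed

text \<open>For \<open>\<eta> \<le> 1\<close> distinct integers lie in distinct intervals \<open>[\<eta>k, \<eta>k + \<eta>)\<close>.\<close>
lemma inj_floor_div:
  fixes \<eta> :: real
  assumes "0 < \<eta>" and "\<eta> \<le> 1"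
  shows "inj (\<lambda>n::int. \<lfloor>of_int n / \<eta>\<rfloor>)"
proof (rule injI)
  fix m n :: int
  assume same: "\<lfloor>of_int m / \<eta>\<rfloor> = \<lfloor>of_int n / \<eta>\<rfloor>"
  define k where "k = \<eta> * of_int \<lfloor>of_int m / \<eta>\<rfloor>"
  have "k \<le> of_int m" "of_int m < k + \<eta>" "k \<le> of_int n" "of_int n < k + \<eta>"
    using floor_multiple_bounds[OF assms(1), of "of_int m"]
      floor_multiple_bounds[OF assms(1), of "of_int n"]
    unfolding k_def same by auto
  then have "\<bar>real_of_int m - of_int n\<bar> < 1"
    using assms(2) by linarith
  then show "m = n" by linarith
qed

theorem mainTheorem3:
  fixes \<eta> :: real
  assumes "0 < \<eta>" and "\<eta> < 1"
    and "\<forall>\<gamma> :: int \<Rightarrow> real. (\<forall>n. \<bar>\<gamma> n - of_int n\<bar> < \<eta>) \<longrightarrow>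
           riesz_basis 1 (UNIV :: int set) (\<lambda>n. expo (\<gamma> n))"
  shows "\<exists>\<Lambda> :: int set. riesz_basis \<eta> \<Lambda> (\<lambda>n. expo (of_int n))"
proof -
  define h where "h = (\<lambda>n::int. \<lfloor>of_int n / \<eta>\<rfloor>)"
  have "\<bar>\<eta> * of_int (h n) - of_int n\<bar> < \<eta>" for n
    using floor_multiple_bounds[OF assms(1), of "of_int n"] unfolding h_def by linarith
  then have "riesz_basis 1 UNIV (\<lambda>n. expo (\<eta> * of_int (h n)))"
    using assms(3)[rule_format, of "\<lambda>n. \<eta> * of_int (h n)"] by blast
  moreover have "(\<lambda>s. expo (\<eta> * of_int (h n)) (1/\<eta> * s)) = expo (of_int (h n))" for n
    using assms(1) by (simp only: expo_dilate) simp
  ultimately have "riesz_basis \<eta> UNIV (\<lambda>n. expo (of_int (h n)))"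
    using riesz_basis_dilate[of "1/\<eta>" 1] assms(1) by fastforce
  moreover have "inj h"
    unfolding h_def using inj_floor_div assms(1,2) by simp
  ultimately have "riesz_basis \<eta> (range h) (\<lambda>m. expo (of_int m))"
    using riesz_basis_reindex[of h UNIV \<eta> "\<lambda>m. expo (of_int m)"] by simp
  then show ?thesis by blast
qed

end
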